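(* As formal power series in $t$, $$\sum_{n\ge0}R_{1,n}t^n=\frac{\sum_{j=0}^{r}(-1)^j d_j t^j}{\sum_{j=0}^{r+1}(-1)^j c_j t^j},\qquad d_j=\sum_{i=0}^{j}(-1)^{j-i}c_i\,R_{1,j-i}.$$
   Context: Fix $r\ge1$, $I_r=\{1,\dots,r\}$. Let $R_{1,0},\dots,R_{r,0},R_{1,1},\dots,R_{r,1}$ be algebraically independent indeterminates over $\mathbb Q$ and $(R_{\alpha,n})_{0\le\alpha\le r+1,n\in\mathbb Z}$ the $A_r$ $Q$-system: the unique family of nonzero elements of $\mathbb Q(R_{1,0},\dots,R_{r,1})$ with these initial values, $R_{0,n}=R_{r+1,n}=1$, and $R_{\alpha,n+1}R_{\alpha,n-1}=R_{\alpha,n}^2+R_{\alpha+1,n}R_{\alpha-1,n}$ ($\alpha\in I_r$, $n\in\mathbb Z$). For $k\in\{0,\dots,r+1\}$, $c_k$ is the determinant of the matrix obtained from $(R_{1,n+i+j-r-3})_{1\le i,j\le r+2}$ by deleting row $r+2$ and column $r+2-k$ (independent of $n$; $c_0=c_{r+1}=1$). *)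

theory Defs
  imports "Jordan_Normal_Form.Determinant" "HOL-Computational_Algebra.Formal_Power_Series"
begin

text \<open>Algebraic independence over the rationals of the family (x i) for i in the finite
  index set I, inside a field of characteristic zero: no nontrivial rational polynomial
  relation (written as a finite linear combination of distinct monomials) holds.\<close>
definition alg_indep_rat :: "'b set \<Rightarrow> ('b \<Rightarrow> 'a::field_char_0) \<Rightarrow> bool" where
  "alg_indep_rat I x \<longleftrightarrow>
     (\<forall>(M :: ('b \<Rightarrow> nat) set) (c :: ('b \<Rightarrow> nat) \<Rightarrow> rat).
        finite M \<longrightarrow> (\<forall>m\<in>M. \<forall>i. i \<notin> I \<longrightarrow> m i = 0) \<longrightarrow>
        (\<Sum>m\<in>M. of_rat (c m) * (\<Prod>i\<in>I. x i ^ m i)) = 0 \<longrightarrow>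
        (\<forall>m\<in>M. c m = 0))"

text \<open>Working in an ambient field of
  characteristic zero containing Q(R_{1,0},...,R_{r,1}).\<close>
definition Q_system :: "nat \<Rightarrow> (nat \<Rightarrow> int \<Rightarrow> 'a::field_char_0) \<Rightarrow> bool" where
  "Q_system r R \<longleftrightarrow>
     alg_indep_rat ({1..r} \<times> {0,1::nat}) (\<lambda>(a,e). R a (int e)) \<and>
     (\<forall>n. R 0 n = 1 \<and> R (r+1) n = 1) \<and>
     (\<forall>a n. a \<le> r+1 \<longrightarrow> R a n \<noteq> 0) \<and>
     (\<forall>a n. 1 \<le> a \<and> a \<le> r \<longrightarrow>
        R a (n+1) * R a (n-1) = (R a n)^2 + R (a+1) n * R (a-1) n)"

text \<open>c_k (computed at shift n): determinant of the (r+1)x(r+1) matrix obtained from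
  (R_{1,n+i+j-r-3})_{1\<le>i,j\<le>r+2} by deleting row r+2 and column r+2-k.
  Entries are 0-indexed: new row i' is old row i'+1; new column j' is old column j'+1
  if j'+1 < r+2-k and old column j'+2 otherwise.\<close>
definition cQ :: "nat \<Rightarrow> (nat \<Rightarrow> int \<Rightarrow> 'a::field_char_0) \<Rightarrow> int \<Rightarrow> nat \<Rightarrow> 'a" where
  "cQ r R n k = det (mat (r+1) (r+1) (\<lambda>(i',j').
      let i = i' + 1; j = (if j' + 1 < r + 2 - k then j' + 1 else j' + 2)
      in R 1 (n + int i + int j - int r - 3)))"

definition dQ :: "nat \<Rightarrow> (nat \<Rightarrow> int \<Rightarrow> 'a::field_char_0) \<Rightarrow> int \<Rightarrow> nat \<Rightarrow> 'a" where
  "dQ r R n j = (\<Sum>i=0..j. (-1)^(j-i) * cQ r R n i * R 1 (int (j-i)))"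

end

theory Submission imports Defs "Jordan_Normal_Form.Char_Poly" begin

(* For the A_r Q-system the Hankel determinants of the sequence R_1 satisfy
   det (R_{1,p+i+j})_{0<=i,j<a} = R_{a,p+a-1}  for a <= r+1, and vanish for a = r+2.
   Both facts follow by induction from the Desnanot-Jacobi identity, whose Hankel form is
   exactly the Q-system recursion.  Expanding an (r+2)x(r+2) Hankel-type determinant with a
   repeated (or vanishing) last row along that row shows that the coefficients (-1)^k c_k
   annihilate R_1 on a window of r+2 consecutive indices; a symmetry between the
   coefficients computed at two different shifts, together with c_0 = c_{r+1} = 1, extends
   this to the linear recurrence  sum_k (-1)^k c_k R_{1,m-k} = 0  for every integer m.
   Multiplying the generating series of R_1 by the denominator therefore leaves exactly the
   polynomial with coefficients (-1)^j d_j, which gives the theorem.  Only the boundary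
   values, the nonvanishing and the recursion of the Q-system are used; the coefficients
   c_k may be computed at any shift n, since their independence of n is never needed. *)


section \<open>The Desnanot-Jacobi identity\<close>

lemma det_2x2:
  assumes "B \<in> carrier_mat 2 2"
  shows "det B = B$$(0,0) * B$$(1,1) - B$$(0,1) * B$$(1,0)"
proof -
  have "det B = (\<Sum>j<2. B $$ (0,j) * cofactor B 0 j)"
    by (rule laplace_expansion_row[OF assms], simp)
  also have "\<dots> = B$$(0,0) * cofactor B 0 0 + B$$(0,1) * cofactor B 0 1"
    by (simp add: numeral_2_eq_2)
  also have "cofactor B 0 0 = B$$(1,1)" unfolding cofactor_def using assms
    by (subst det_single) (auto simp: mat_delete_def insert_index_def)
  also have "cofactor B 0 1 = - B$$(1,0)" unfolding cofactor_def using assms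
    by (subst det_single) (auto simp: mat_delete_def insert_index_def)
  finally show ?thesis by (simp add: algebra_simps)
qed

text \<open>Jacobi's complementary minor theorem for the lower right 2x2 block of the adjugate:
  multiplying A by the identity with its last two columns replaced by those of adj A gives
  a block lower triangular matrix.\<close>

lemma adj_mat_lower_right_minor:
  fixes A :: "'a::idom mat"
  assumes A: "A \<in> carrier_mat (m+2) (m+2)" and dA: "det A \<noteq> 0"
  shows "det (mat 2 2 (\<lambda>(i,j). adj_mat A $$ (i+m,j+m))) = det A * det (mat m m (\<lambda>(i,j). A$$(i,j)))"
proof -
  define n where "n = m+2"
  define C where "C = adj_mat A"
  have C: "C \<in> carrier_mat n n" and AC: "A * C = det A \<cdot>\<^sub>m 1\<^sub>m n"
    using adj_mat[OF A] unfolding C_def n_def by auto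
  define E where "E = mat n n (\<lambda>(i,j). if j < m then (if i = j then 1 else 0) else C$$(i,j))"
  have E: "E \<in> carrier_mat n n" unfolding E_def by auto
  define A11 where "A11 = mat m m (\<lambda>(i,j). A$$(i,j))"
  define A21 where "A21 = mat 2 m (\<lambda>(i,j). A$$(i+m,j))"
  define C12 where "C12 = mat m 2 (\<lambda>(i,j). C$$(i,j+m))"
  define C22 where "C22 = mat 2 2 (\<lambda>(i,j). C$$(i+m,j+m))"
  have AE: "A * E = four_block_mat A11 (0\<^sub>m m 2) A21 (det A \<cdot>\<^sub>m 1\<^sub>m 2)"
  proof (rule eq_matI)
    fix i j assume "i < dim_row (four_block_mat A11 (0\<^sub>m m 2) A21 (det A \<cdot>\<^sub>m 1\<^sub>m 2))"
      and "j < dim_col (four_block_mat A11 (0\<^sub>m m 2) A21 (det A \<cdot>\<^sub>m 1\<^sub>m 2))"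
    hence i: "i < n" and j: "j < n" by (auto simp: A11_def n_def)
    show "(A * E) $$ (i, j) = four_block_mat A11 (0\<^sub>m m 2) A21 (det A \<cdot>\<^sub>m 1\<^sub>m 2) $$ (i, j)"
    proof (cases "j < m")
      case True
      have "(A * E) $$ (i,j) = (\<Sum>k<n. A$$(i,k) * (if k = j then 1 else 0))"
        using i j A E True unfolding E_def n_def
        by (simp add: scalar_prod_def atLeast0LessThan)
      also have "\<dots> = A$$(i,j)" using j by (simp add: if_distrib cong: if_cong)
      finally show ?thesis using True i j
        by (auto simp: four_block_mat_def A11_def A21_def n_def Let_def)
    next
      case False
      have "(A * E) $$ (i,j) = (A * C) $$ (i,j)"
        using i j A E C False unfolding E_def n_def by (simp add: scalar_prod_def)
      also have "\<dots> = (if i = j then det A else 0)" using i j AC by simp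
      finally show ?thesis using False i j
        by (auto simp: four_block_mat_def A11_def A21_def n_def Let_def)
    qed
  qed (insert A E, auto simp: A11_def n_def)
  have EB: "E = four_block_mat (1\<^sub>m m) C12 (0\<^sub>m 2 m) C22"
    by (rule eq_matI) (auto simp: E_def four_block_mat_def C12_def C22_def n_def Let_def)
  have "det E = det C22"
    unfolding EB by (subst det_four_block_mat_lower_left_zero) (auto simp: C12_def C22_def)
  hence "det A * det C22 = det (A * E)" using det_mult[OF A[folded n_def] E] by simp
  also have "\<dots> = det A11 * (det A * det A)"
    unfolding AE by (subst det_four_block_mat_upper_right_zero)
      (auto simp: A11_def A21_def power2_eq_square)
  finally show ?thesis using dA unfolding C22_def C_def A11_def by (simp add: algebra_simps)
qed

text \<open>Desnanot-Jacobi for a nonsingular matrix, in terms of its last two rows and columns: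
  the 2x2 block of the adjugate consists of the four relevant cofactors.\<close>

lemma desnanot_jacobi_nonsingular:
  fixes A :: "'a::idom mat"
  assumes A: "A \<in> carrier_mat (m+2) (m+2)" and dA: "det A \<noteq> 0"
  shows "det A * det (mat m m (\<lambda>(i,j). A$$(i,j))) =
     det (mat_delete A (m+1) (m+1)) * det (mat_delete A m m)
   - det (mat_delete A (m+1) m) * det (mat_delete A m (m+1))"
proof -
  let ?C = "adj_mat A"
  have "det A * det (mat m m (\<lambda>(i,j). A$$(i,j))) = det (mat 2 2 (\<lambda>(i,j). ?C $$ (i+m,j+m)))"
    using adj_mat_lower_right_minor[OF A dA] by simp
  also have "\<dots> = ?C$$(m,m) * ?C$$(m+1,m+1) - ?C$$(m,m+1) * ?C$$(m+1,m)"
    by (subst det_2x2) auto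
  also have "\<dots> = det (mat_delete A (m+1) (m+1)) * det (mat_delete A m m)
   - det (mat_delete A (m+1) m) * det (mat_delete A m (m+1))"
    using A unfolding adj_mat_def cofactor_def by (simp add: algebra_simps)
  finally show ?thesis .
qed

text \<open>Deleting rows/columns and evaluating entries at 0 commute with taking determinants;
  this transfers the identity from polynomial matrices to matrices over the coefficients.\<close>

lemma map_mat_delete: "map_mat h (mat_delete A i j) = mat_delete (map_mat h A) i j"
  by (rule eq_matI) (auto simp: mat_delete_def insert_index_def)

lemma eval_at_0_hom: "comm_ring_hom (\<lambda>p::'a::comm_ring_1 poly. poly p 0)"
  by unfold_locales auto

text \<open>The general identity: apply the nonsingular case to the characteristic matrix of -A,
  whose determinant is a monic polynomial, and evaluate at 0.\<close>

lemma desnanot_jacobi: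
  fixes A :: "'a::idom mat"
  assumes A: "A \<in> carrier_mat (m+2) (m+2)"
  shows "det A * det (mat m m (\<lambda>(i,j). A$$(i,j))) =
     det (mat_delete A (m+1) (m+1)) * det (mat_delete A m m)
   - det (mat_delete A (m+1) m) * det (mat_delete A m (m+1))"
proof -
  define P where "P = char_poly_matrix (-A)"
  have mA: "-A \<in> carrier_mat (m+2) (m+2)" using A by auto
  have P: "P \<in> carrier_mat (m+2) (m+2)" unfolding P_def using mA by simp
  have "coeff (char_poly (-A)) (m+2) = 1" using degree_monic_char_poly[OF mA] by simp
  hence dP: "det P \<noteq> 0" unfolding P_def char_poly_def by auto
  have PA: "map_mat (\<lambda>p. poly p 0) P = A"
    by (rule eq_matI) (insert A, auto simp: P_def char_poly_matrix_def)
  have sub: "map_mat (\<lambda>p. poly p 0) (mat m m (\<lambda>(i,j). P$$(i,j))) = mat m m (\<lambda>(i,j). A$$(i,j))"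
    by (rule eq_matI) (insert A P, auto simp: PA[symmetric])
  have "poly (det P * det (mat m m (\<lambda>(i,j). P$$(i,j)))) 0 =
     poly (det (mat_delete P (m+1) (m+1)) * det (mat_delete P m m)
   - det (mat_delete P (m+1) m) * det (mat_delete P m (m+1))) 0"
    using desnanot_jacobi_nonsingular[OF P dP] by simp
  thus ?thesis
    by (simp only: poly_mult poly_diff comm_ring_hom.hom_det[OF eval_at_0_hom, symmetric]
        map_mat_delete PA sub)
qed

text \<open>Permuting columns, and conjugating by a permutation, as counterparts of the library
  lemma for rows; these move the first row and column of a matrix behind the others.\<close>

lemma det_permute_cols:
  assumes A: "A \<in> carrier_mat n n" and p: "p permutes {0 ..< (n :: nat)}"
  shows "det (mat n n (\<lambda> (i,j). A $$ (i, p j))) = signof p * det A"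
proof -
  have "det (mat n n (\<lambda> (i,j). A $$ (i, p j))) = det ((mat n n (\<lambda> (i,j). A $$ (i, p j)))\<^sup>T)"
    by (subst det_transpose) auto
  also have "(mat n n (\<lambda> (i,j). A $$ (i, p j)))\<^sup>T = mat n n (\<lambda> (i,j). A\<^sup>T $$ (p i, j))"
    by (rule eq_matI) (insert A permutes_in_image[OF p], auto)
  also have "det \<dots> = signof p * det A\<^sup>T" using det_permute_rows[of "A\<^sup>T" n p] A p by auto
  finally show ?thesis using det_transpose[OF A] by simp
qed

lemma signof_square: "signof p * signof p = (1::'a::comm_ring_1)"
  by (simp add: sign_def)

lemma det_conjugate_perm:
  assumes A: "A \<in> carrier_mat n n" and p: "p permutes {0 ..< (n :: nat)}"
  shows "det (mat n n (\<lambda> (i,j). A $$ (p i, p j))) = det A"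
proof -
  define B where "B = mat n n (\<lambda> (i,j). A $$ (i, p j))"
  have B: "B \<in> carrier_mat n n" unfolding B_def by auto
  have "mat n n (\<lambda> (i,j). A $$ (p i, p j)) = mat n n (\<lambda> (i,j). B $$ (p i, j))"
    by (rule eq_matI) (insert permutes_in_image[OF p], auto simp: B_def)
  hence "det (mat n n (\<lambda> (i,j). A $$ (p i, p j))) = signof p * det B"
    using det_permute_rows[OF B p] by simp
  also have "det B = signof p * det A" unfolding B_def by (rule det_permute_cols[OF A p])
  finally show ?thesis by (simp add: mult.assoc[symmetric] signof_square)
qed

lemma shift_to_front_permutes:
  assumes "k = m+1 \<or> k = m+2"
  shows "(\<lambda>i::nat. if i < m then i+1 else if i = m then 0 else i) permutes {0..<k}"
proof -
  let ?t = "\<lambda>i::nat. if i < m then i+1 else if i = m then 0 else i"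
  have inj: "inj_on ?t {0..<k}" by (auto simp: inj_on_def split: if_splits)
  have sub: "?t ` {0..<k} \<subseteq> {0..<k}" using assms by auto
  have "?t ` {0..<k} = {0..<k}" by (rule endo_inj_surj[OF _ sub inj]) simp
  hence "bij_betw ?t {0..<k} {0..<k}" using inj by (simp add: bij_betw_def)
  thus ?thesis by (rule bij_imp_permutes) (use assms in auto)
qed

text \<open>The classical form of Desnanot-Jacobi: deleting the first and/or last row and
  column.  Obtained from the previous form by moving the first row and column to position m.\<close>

lemma desnanot_jacobi_corners:
  fixes f :: "nat \<Rightarrow> nat \<Rightarrow> 'a::idom"
  shows "det (mat (m+2) (m+2) (\<lambda>(i,j). f i j)) * det (mat m m (\<lambda>(i,j). f (i+1) (j+1))) =
    det (mat (m+1) (m+1) (\<lambda>(i,j). f i j)) * det (mat (m+1) (m+1) (\<lambda>(i,j). f (i+1) (j+1)))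
  - det (mat (m+1) (m+1) (\<lambda>(i,j). f i (j+1))) * det (mat (m+1) (m+1) (\<lambda>(i,j). f (i+1) j))"
proof -
  define t where "t = (\<lambda>i::nat. if i < m then i+1 else if i = m then 0 else i)"
  have t1: "t permutes {0..<m+1}" and t2: "t permutes {0..<m+2}"
    unfolding t_def by (rule shift_to_front_permutes, simp)+
  define A where "A = mat (m+2) (m+2) (\<lambda>(i,j). f (t i) (t j))"
  have A: "A \<in> carrier_mat (m+2) (m+2)" unfolding A_def by simp
  have tlt: "\<And>i k. i < k \<Longrightarrow> k = m+1 \<or> k = m+2 \<Longrightarrow> t i < k" unfolding t_def by auto
  have e1: "det A = det (mat (m+2) (m+2) (\<lambda>(i,j). f i j))"
  proof -
    define B where "B = mat (m+2) (m+2) (\<lambda>(i,j). f i j)"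
    have eq: "A = mat (m+2) (m+2) (\<lambda>(i,j). B $$ (t i, t j))"
      unfolding A_def B_def by (rule eq_matI) (auto simp: tlt)
    show ?thesis unfolding eq B_def[symmetric] by (rule det_conjugate_perm[OF _ t2]) (simp add: B_def)
  qed
  have e2: "mat m m (\<lambda>(i,j). A$$(i,j)) = mat m m (\<lambda>(i,j). f (i+1) (j+1))"
    unfolding A_def by (rule eq_matI) (auto simp: t_def)
  have e3: "det (mat_delete A (m+1) (m+1)) = det (mat (m+1) (m+1) (\<lambda>(i,j). f i j))"
  proof -
    define B where "B = mat (m+1) (m+1) (\<lambda>(i,j). f i j)"
    have eq: "mat_delete A (m+1) (m+1) = mat (m+1) (m+1) (\<lambda>(i,j). B $$ (t i, t j))"
      unfolding A_def B_def by (rule eq_matI) (auto simp: tlt mat_delete_def insert_index_def)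
    show ?thesis unfolding eq B_def[symmetric] by (rule det_conjugate_perm[OF _ t1]) (simp add: B_def)
  qed
  have e4: "mat_delete A m m = mat (m+1) (m+1) (\<lambda>(i,j). f (i+1) (j+1))"
    unfolding A_def by (rule eq_matI) (auto simp: t_def mat_delete_def insert_index_def)
  have e5: "det (mat_delete A (m+1) m) = signof t * det (mat (m+1) (m+1) (\<lambda>(i,j). f i (j+1)))"
  proof -
    define B where "B = mat (m+1) (m+1) (\<lambda>(i,j). f i (j+1))"
    have eq: "mat_delete A (m+1) m = mat (m+1) (m+1) (\<lambda>(i,j). B $$ (t i, j))"
      unfolding A_def B_def
      by (rule eq_matI) (auto simp: tlt mat_delete_def insert_index_def, auto simp: t_def)
    show ?thesis unfolding eq B_def[symmetric] by (rule det_permute_rows[OF _ t1]) (simp add: B_def)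
  qed
  have e6: "det (mat_delete A m (m+1)) = signof t * det (mat (m+1) (m+1) (\<lambda>(i,j). f (i+1) j))"
  proof -
    define B where "B = mat (m+1) (m+1) (\<lambda>(i,j). f (i+1) j)"
    have eq: "mat_delete A m (m+1) = mat (m+1) (m+1) (\<lambda>(i,j). B $$ (i, t j))"
      unfolding A_def B_def
      by (rule eq_matI) (auto simp: tlt mat_delete_def insert_index_def, auto simp: t_def)
    show ?thesis unfolding eq B_def[symmetric] by (rule det_permute_cols[OF _ t1]) (simp add: B_def)
  qed
  have "signof t * x * (signof t * y) = x * (y::'a)" for x y
    by (simp add: algebra_simps signof_square[of t, where 'a='a, simplified mult.assoc[symmetric]]
        flip: mult.assoc)
  thus ?thesis using desnanot_jacobi[OF A] unfolding e1 e2 e3 e4 e5 e6 by simp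
qed


section \<open>Hankel determinants\<close>

definition hankel_det :: "(int \<Rightarrow> 'a::comm_ring_1) \<Rightarrow> nat \<Rightarrow> int \<Rightarrow> 'a" where
  "hankel_det s a p = det (mat a a (\<lambda>(i,j). s (p + int i + int j)))"

text \<open>For Hankel matrices Desnanot-Jacobi becomes a three-term recursion in the size.\<close>

lemma hankel_det_recursion:
  fixes s :: "int \<Rightarrow> 'a::idom"
  assumes "a \<ge> 1"
  shows "hankel_det s (a+1) p * hankel_det s (a-1) (p+2) =
    hankel_det s a p * hankel_det s a (p+2) - (hankel_det s a (p+1))^2"
proof -
  obtain m where a: "a = m+1" using assms by (metis le_add_diff_inverse2)
  have shift: "mat k k (\<lambda>(i,j). s (p + int (i+u) + int (j+v))) =
      mat k k (\<lambda>(i,j). s ((p + int (u+v)) + int i + int j))" for k u v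
    by (rule eq_matI) (auto simp: algebra_simps)
  show ?thesis
    using desnanot_jacobi_corners[where f="\<lambda>i j. s (p + int i + int j)" and m=m]
      shift[of _ 1 1] shift[of _ 0 1] shift[of _ 1 0]
    unfolding hankel_det_def a by (simp add: power2_eq_square)
qed


section \<open>Hankel determinants of the Q-system\<close>

text \<open>The properties of a Q-system used below.\<close>

lemma Q_systemD:
  assumes "Q_system r R"
  shows "\<And>n. R 0 n = 1" and "\<And>n. R (r+1) n = 1" and "\<And>a n. a \<le> r+1 \<Longrightarrow> R a n \<noteq> 0"
    and "\<And>a n. 1 \<le> a \<Longrightarrow> a \<le> r \<Longrightarrow> R a (n+1) * R a (n-1) = (R a n)^2 + R (a+1) n * R (a-1) n"
  using assms unfolding Q_system_def by auto

text \<open>The Hankel determinants of R_1 are the other Q-system variables: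
  both sides satisfy the same recursion, with the same values for a = 0 and a = 1.\<close>

lemma Q_system_hankel_det:
  assumes Q: "Q_system r R" and "a \<le> r+1"
  shows "hankel_det (R 1) a p = R a (p + int a - 1)"
  using assms(2)
proof (induction a arbitrary: p rule: less_induct)
  case (less a)
  consider "a = 0" | "a = 1" | b where "a = b+1" "b \<ge> 1"
    by (metis One_nat_def add.commute le_add1 not0_implies_Suc plus_1_eq_Suc)
  then show ?case
  proof cases
    case 1 thus ?thesis by (simp add: hankel_det_def Q_systemD(1)[OF Q])
  next
    case 2 thus ?thesis by (simp add: hankel_det_def det_single)
  next
    case 3
    have b: "b \<le> r" using 3 less.prems by simp
    have IH1: "\<And>q. hankel_det (R 1) b q = R b (q + int b - 1)"
      using less.IH[of b] 3 less.prems by simp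
    have IH2: "\<And>q. hankel_det (R 1) (b-1) q = R (b-1) (q + int b - 2)"
      using less.IH[of "b-1"] 3 less.prems by (simp add: of_nat_diff)
    define n where "n = p + int b"
    have "hankel_det (R 1) (b+1) p * R (b-1) n = R b (n-1) * R b (n+1) - (R b n)^2"
      using hankel_det_recursion[OF 3(2), of "R 1" p] unfolding IH1 IH2 n_def
      by (simp add: algebra_simps)
    also have "\<dots> = R (b+1) n * R (b-1) n"
      using Q_systemD(4)[OF Q 3(2) b, of n] by (simp add: algebra_simps)
    finally have "hankel_det (R 1) (b+1) p = R (b+1) n"
      using Q_systemD(3)[OF Q, of "b-1" n] b by simp
    thus ?thesis using 3 by (simp add: n_def)
  qed
qed

text \<open>Since R_{r+1} = 1, the recursion forces the (r+2) x (r+2) Hankel determinants to vanish.\<close>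

lemma Q_system_hankel_det_vanishes:
  assumes Q: "Q_system r R"
  shows "hankel_det (R 1) (r+2) p = 0"
proof -
  have "hankel_det (R 1) (r+2) p * hankel_det (R 1) r (p+2) = 0"
    using hankel_det_recursion[of "r+1" "R 1" p] Q_system_hankel_det[OF Q, of "r+1"]
      Q_systemD(2)[OF Q] by simp
  moreover have "hankel_det (R 1) r (p+2) \<noteq> 0"
    using Q_system_hankel_det[OF Q, of r] Q_systemD(3)[OF Q, of r] by simp
  ultimately show ?thesis by simp
qed

text \<open>The extreme coefficients c_0 and c_{r+1} are Hankel determinants of size r+1, hence 1.\<close>

lemma cQ_first:
  assumes Q: "Q_system r R"
  shows "cQ r R p 0 = 1"
proof -
  have "cQ r R p 0 = hankel_det (R 1) (r+1) (p - int r - 1)"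
    unfolding cQ_def hankel_det_def
    by (intro arg_cong[of _ _ det] eq_matI) (auto simp: Let_def algebra_simps)
  thus ?thesis using Q_system_hankel_det[OF Q, of "r+1"] Q_systemD(2)[OF Q] by simp
qed

lemma cQ_last:
  assumes Q: "Q_system r R"
  shows "cQ r R p (r+1) = 1"
proof -
  have "cQ r R p (r+1) = hankel_det (R 1) (r+1) (p - int r)"
    unfolding cQ_def hankel_det_def
    by (intro arg_cong[of _ _ det] eq_matI) (auto simp: Let_def algebra_simps)
  thus ?thesis using Q_system_hankel_det[OF Q, of "r+1"] Q_systemD(2)[OF Q] by simp
qed


section \<open>The linear recurrence for R_1\<close>

definition rec_defect :: "nat \<Rightarrow> (nat \<Rightarrow> int \<Rightarrow> 'a::field_char_0) \<Rightarrow> int \<Rightarrow> int \<Rightarrow> 'a" where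
  "rec_defect r R a m = (\<Sum>k=0..r+1. (-1)^k * cQ r R a k * R 1 (m - int k))"

text \<open>Near the shift a the recurrence holds: rec_defect at a+l is the Laplace expansion along
  the last row of an (r+2) x (r+2) matrix whose last row repeats row l (for l <= r) or which
  is a vanishing Hankel determinant (for l = r+1).\<close>

lemma rec_defect_window:
  assumes Q: "Q_system r R" and l: "l \<le> r+1"
  shows "rec_defect r R p (p + int l) = 0"
proof -
  define q where "q = p - int r - 1"
  define G where "G = mat (r+2) (r+2) (\<lambda>(i,j).
    if i = r+1 then R 1 (q + int l + int j) else R 1 (q + int i + int j))"
  have G: "G \<in> carrier_mat (r+2) (r+2)" unfolding G_def by simp
  have minor: "det (mat_delete G (r+1) j) = cQ r R p (r+1-j)" if "j < r+2" for j
    unfolding cQ_def G_def q_def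
    by (intro arg_cong[of _ _ det] eq_matI)
      (use that in \<open>auto simp: Let_def algebra_simps mat_delete_def insert_index_def\<close>)
  have "det G = (\<Sum>j<r+2. G $$ (r+1,j) * cofactor G (r+1) j)"
    by (rule laplace_expansion_row[OF G]) simp
  also have "\<dots> = (\<Sum>j<r+2. R 1 (q + int l + int j) * ((-1)^(r+1-j) * cQ r R p (r+1-j)))"
  proof (intro sum.cong refl)
    fix j assume "j \<in> {..<r+2}"
    hence j: "j < r+2" by simp
    have "cofactor G (r+1) j = (-1)^(r+1-j) * cQ r R p (r+1-j)"
      unfolding cofactor_def minor[OF j]
      by (subst neg_one_power_add_eq_neg_one_power_diff) (use j in auto)
    thus "G $$ (r+1,j) * cofactor G (r+1) j =
        R 1 (q + int l + int j) * ((-1)^(r+1-j) * cQ r R p (r+1-j))"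
      using j by (simp add: G_def)
  qed
  also have "\<dots> = (\<Sum>j=0..r+1. R 1 (q + int l + int (r+1-j)) * ((-1)^j * cQ r R p j))"
    by (rule sum.reindex_bij_witness[of _ "\<lambda>j. r+1-j" "\<lambda>j. r+1-j"]) auto
  also have "\<dots> = rec_defect r R p (p + int l)"
    unfolding rec_defect_def by (rule sum.cong) (auto simp: q_def of_nat_diff algebra_simps)
  finally have expand: "det G = rec_defect r R p (p + int l)" .
  have "det G = 0"
  proof (cases "l = r+1")
    case True
    have "G = mat (r+2) (r+2) (\<lambda>(i,j). R 1 (q + int i + int j))"
      unfolding G_def True by (rule eq_matI) auto
    thus ?thesis using Q_system_hankel_det_vanishes[OF Q, of q] unfolding hankel_det_def by simp
  next
    case False
    show ?thesis
      by (rule det_identical_rows[OF G, of l "r+1"]) (use False l in \<open>auto simp: G_def\<close>)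
  qed
  thus ?thesis using expand by simp
qed

text \<open>Applying the recurrence at shift a to the defects at shift n is symmetric in a and n
  (both are the same double sum).\<close>

lemma rec_defect_swap:
  "(\<Sum>k=0..r+1. ((-1)^k * cQ r R a k) * rec_defect r R n (M - int k)) =
   (\<Sum>l=0..r+1. ((-1)^l * cQ r R n l) * rec_defect r R a (M - int l))"
proof -
  have "(\<Sum>k=0..r+1. ((-1)^k * cQ r R a k) * rec_defect r R n (M - int k)) =
     (\<Sum>k=0..r+1. \<Sum>l=0..r+1. ((-1)^k * cQ r R a k) * ((-1)^l * cQ r R n l) * R 1 (M - int k - int l))"
    unfolding rec_defect_def sum_distrib_left by (simp add: mult_ac)
  also have "\<dots> = (\<Sum>l=0..r+1. \<Sum>k=0..r+1. ((-1)^k * cQ r R a k) * ((-1)^l * cQ r R n l) * R 1 (M - int k - int l))"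
    by (rule sum.swap)
  also have "\<dots> = (\<Sum>l=0..r+1. ((-1)^l * cQ r R n l) * rec_defect r R a (M - int l))"
    unfolding rec_defect_def sum_distrib_left
    by (intro sum.cong refl) (simp add: mult_ac diff_diff_eq add.commute)
  finally show ?thesis .
qed

lemma rec_defect_recurrence:
  assumes Q: "Q_system r R"
  shows "(\<Sum>k=0..r+1. ((-1)^k * cQ r R a k) * rec_defect r R n (a + int (r+1) - int k)) = 0"
proof -
  have "(\<Sum>l=0..r+1. ((-1)^l * cQ r R n l) * rec_defect r R a (a + int (r+1) - int l)) = 0"
  proof (intro sum.neutral ballI)
    fix l assume "l \<in> {0..r+1}"
    hence "rec_defect r R a (a + int (r+1) - int l) = 0"
      using rec_defect_window[OF Q, of "r+1-l" a] by (simp add: of_nat_diff algebra_simps)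
    thus "((-1)^l * cQ r R n l) * rec_defect r R a (a + int (r+1) - int l) = 0" by simp
  qed
  thus ?thesis by (subst rec_defect_swap)
qed

text \<open>A two-sided sequence satisfying a linear recurrence of order N whose first and last
  coefficients never vanish is zero as soon as it vanishes at N consecutive indices: the
  window of zeros can be moved one step in either direction.\<close>

lemma recurrence_zero_propagation:
  fixes f :: "int \<Rightarrow> 'a::idom" and c :: "int \<Rightarrow> nat \<Rightarrow> 'a"
  assumes rec: "\<And>a. (\<Sum>k=0..N. c a k * f (a + int N - int k)) = 0"
    and first: "\<And>a. c a 0 \<noteq> 0" and last: "\<And>a. c a N \<noteq> 0"
    and N: "0 < N" and init: "\<And>l. l < N \<Longrightarrow> f (n + int l) = 0"
  shows "f m = 0"
proof -
  define window where "window a \<longleftrightarrow> (\<forall>l<N. f (a + int l) = 0)" for a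
  have up: "window (a+1)" if win: "window a" for a
  proof -
    have "(\<Sum>k=1..N. c a k * f (a + int N - int k)) = 0"
    proof (intro sum.neutral ballI)
      fix k assume "k \<in> {1..N}"
      thus "c a k * f (a + int N - int k) = 0"
        using win[unfolded window_def, rule_format, of "N-k"] by (simp add: of_nat_diff add_diff_eq)
    qed
    moreover have "{0..N} = insert 0 {1..N}" by auto
    ultimately have "c a 0 * f (a + int N) = 0" using rec[of a] by simp
    hence "f (a + int N) = 0" using first by simp
    show ?thesis unfolding window_def
    proof (intro allI impI)
      fix l assume "l < N"
      then consider "Suc l < N" | "Suc l = N" by linarith
      thus "f (a + 1 + int l) = 0"
        using win \<open>f (a + int N) = 0\<close> unfolding window_def
        by cases (metis add.assoc add.commute of_nat_Suc)+
    qed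
  qed
  have down: "window a" if win: "window (a+1)" for a
  proof -
    have "(\<Sum>k<N. c a k * f (a + int N - int k)) = 0"
    proof (intro sum.neutral ballI)
      fix k assume "k \<in> {..<N}"
      thus "c a k * f (a + int N - int k) = 0"
        using win[unfolded window_def, rule_format, of "N-1-k"] by (simp add: of_nat_diff add_diff_eq)
    qed
    moreover have "{0..N} = insert N {..<N}" by auto
    ultimately have "c a N * f a = 0" using rec[of a] by simp
    hence "f a = 0" using last by simp
    show ?thesis unfolding window_def
    proof (intro allI impI)
      fix l assume "l < N"
      show "f (a + int l) = 0"
      proof (cases l)
        case (Suc j)
        thus ?thesis using win \<open>l < N\<close> unfolding window_def
          by (metis Suc_lessD add.assoc add.commute of_nat_Suc)
      qed (simp add: \<open>f a = 0\<close>)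
    qed
  qed
  have "window m"
  proof (induction m rule: int_induct[of _ n])
    case base thus ?case using init by (simp add: window_def)
  next
    case (step1 i) thus ?case using up by blast
  next
    case (step2 i) thus ?case using down[of "i - 1"] by simp
  qed
  thus ?thesis using N unfolding window_def by (metis add.right_neutral of_nat_0)
qed

lemma Q_system_linear_recurrence:
  assumes Q: "Q_system r R"
  shows "rec_defect r R n m = 0"
proof (rule recurrence_zero_propagation[where N="r+1" and c="\<lambda>a k. (-1)^k * cQ r R a k"])
  show "\<And>a. (\<Sum>k=0..r+1. ((-1)^k * cQ r R a k) * rec_defect r R n (a + int (r+1) - int k)) = 0"
    by (rule rec_defect_recurrence[OF Q])
  show "\<And>l. l < r+1 \<Longrightarrow> rec_defect r R n (n + int l) = 0"
    by (rule rec_defect_window[OF Q]) simp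
qed (simp_all add: cQ_first[OF Q] cQ_last[OF Q, simplified])


section \<open>The generating function\<close>

text \<open>Below degree r+1 the product of the denominator with the series of R_1 is given by the
  numbers d_j; this is just the definition of d_j with the sign (-1)^j pulled out.\<close>

lemma convolution_eq_dQ:
  "(\<Sum>i=0..m. (-1)^i * cQ r R n i * R 1 (int m - int i)) = (-1)^m * dQ r R n m"
  unfolding dQ_def sum_distrib_left
proof (intro sum.cong refl)
  fix i assume "i \<in> {0..m}"
  hence i: "i \<le> m" by simp
  have "(-1::'a)^m * (-1)^(m-i) = (-1)^m * (-1)^(m+i)"
    by (simp add: neg_one_power_add_eq_neg_one_power_diff[OF i])
  also have "\<dots> = (-1)^i" by (simp add: power_add flip: mult.assoc)
  finally show "(-1)^i * cQ r R n i * R 1 (int m - int i) =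
      (-1)^m * ((-1)^(m-i) * cQ r R n i * R 1 (int (m-i)))"
    using i by (simp add: of_nat_diff mult.assoc[symmetric])
qed

lemma fps_nth_poly_sum:
  "fps_nth (\<Sum>j=0..K. fps_const (a j) * fps_X ^ j) k = (if k \<le> K then a k else (0::'a::comm_ring_1))"
  by (simp add: fps_sum_nth if_distrib cong: if_cong)

lemma fps_eq_divide_if_mult_eq:
  fixes D F N :: "'a::field fps"
  assumes "fps_nth D 0 \<noteq> 0" and "D * F = N"
  shows "F = N / D"
  using assms by (metis fps_nonzero_nth nonzero_mult_div_cancel_left)

text \<open>Denominator times series equals numerator, coefficientwise: below degree r+1 by the
  definition of d_j, from degree r+1 on by the linear recurrence.\<close>

lemma denominator_times_series:
  assumes Q: "Q_system r R"
  shows "(\<Sum>j=0..r+1. fps_const ((-1)^j * cQ r R n j) * fps_X ^ j) * Abs_fps (\<lambda>m. R 1 (int m)) =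
    (\<Sum>j=0..r. fps_const ((-1)^j * dQ r R n j) * fps_X ^ j)"
    (is "_ * ?F = ?N")
proof -
  define D where "D = (\<Sum>j=0..r+1. fps_const ((-1)^j * cQ r R n j) * fps_X ^ j)"
  have D: "fps_nth D i = (if i \<le> r+1 then (-1)^i * cQ r R n i else 0)" for i
    unfolding D_def by (rule fps_nth_poly_sum)
  have "fps_nth (D * ?F) m = fps_nth ?N m" for m
  proof -
    have "fps_nth (D * ?F) m = (\<Sum>i=0..m. fps_nth D i * R 1 (int m - int i))"
      unfolding fps_mult_nth by (intro sum.cong refl) (simp add: of_nat_diff)
    also have "\<dots> = fps_nth ?N m"
    proof (cases "m \<le> r")
      case True
      have "(\<Sum>i=0..m. fps_nth D i * R 1 (int m - int i)) =
          (\<Sum>i=0..m. (-1)^i * cQ r R n i * R 1 (int m - int i))"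
        by (intro sum.cong refl) (use True in \<open>auto simp: D\<close>)
      also have "\<dots> = (-1)^m * dQ r R n m" by (rule convolution_eq_dQ)
      also have "\<dots> = fps_nth ?N m" using True by (simp add: fps_nth_poly_sum)
      finally show ?thesis .
    next
      case False
      have "(\<Sum>i=0..m. fps_nth D i * R 1 (int m - int i)) =
          (\<Sum>i=0..r+1. fps_nth D i * R 1 (int m - int i))"
        by (rule sum.mono_neutral_right) (use False in \<open>auto simp: D\<close>)
      also have "\<dots> = rec_defect r R n (int m)"
        unfolding rec_defect_def by (intro sum.cong refl) (simp add: D)
      finally show ?thesis
        using False Q_system_linear_recurrence[OF Q] by (simp add: fps_nth_poly_sum)
    qed
    finally show ?thesis .
  qed
  thus ?thesis unfolding D_def by (rule fps_ext)
qed

theorem mainTheorem7: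
  fixes r :: nat and R :: "nat \<Rightarrow> int \<Rightarrow> 'a::field_char_0" and n :: int
  assumes "r \<ge> 1" and "Q_system r R"
  shows "Abs_fps (\<lambda>m. R 1 (int m)) =
    (\<Sum>j=0..r. fps_const ((-1)^j * dQ r R n j) * fps_X ^ j) /
    (\<Sum>j=0..r+1. fps_const ((-1)^j * cQ r R n j) * fps_X ^ j)"
proof (rule fps_eq_divide_if_mult_eq)
  show "fps_nth (\<Sum>j=0..r+1. fps_const ((-1)^j * cQ r R n j) * fps_X ^ j) 0 \<noteq> 0"
    by (simp add: fps_nth_poly_sum cQ_first[OF assms(2)])
qed (rule denominator_times_series[OF assms(2)])

end
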